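(* There exist a constant $c>0$ and a sequence of sets $S_k\subseteq\mathbb{N}$ ($k\geq 1$) with $|S_k|=k+2$ such that $z_{S_k}\geq c\sqrt{k}$ for all sufficiently large $k$.
   Context: $\mathbb{N}=\{0,1,2,\dots\}$. For a finite nonempty set $S=\{e_1,\dots,e_k\}\subseteq\mathbb{N}$ (distinct elements), let $f_S(x)=\sum_{i=1}^k a_i x^{e_i}$, where $a_1,\dots,a_k$ are independent standard normal random variables. For an open interval $I\subseteq(0,\infty)$, $z_S^I$ denotes the expected number of zeros of $f_S$ in $I$, and $z_S:=z_S^{(0,1)}$. *)

theory Defs
  imports "HOL-Probability.Probability"
begin

definition std_normal :: "real measure" where
  "std_normal = density lborel std_normal_density"

definition coeff_space :: "nat set \<Rightarrow> (nat \<Rightarrow> real) measure" where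
  "coeff_space S = PiM S (\<lambda>_. std_normal)"

definition rand_poly :: "nat set \<Rightarrow> (nat \<Rightarrow> real) \<Rightarrow> real \<Rightarrow> real" where
  "rand_poly S a x = (\<Sum>e\<in>S. a e * x ^ e)"

text \<open>Expected number of zeros of f_S in the interval I (as an extended nonnegative real).
  The event that f_S is identically zero (infinitely many zeros) has probability zero.\<close>
definition exp_zeros_in :: "nat set \<Rightarrow> real set \<Rightarrow> ennreal" where
  "exp_zeros_in S I = (\<integral>\<^sup>+ a. ennreal (real (card {x\<in>I. rand_poly S a x = 0})) \<partial>coeff_space S)"

definition exp_zeros :: "nat set \<Rightarrow> ennreal" where
  "exp_zeros S = exp_zeros_in S {0<..<1}"

end

theory Submission
  imports Defs "HOL-Computational_Algebra.Polynomial" "HOL-Real_Asymp.Real_Asymp"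
begin

text \<open>Take the lacunary exponents e_i = B^i (i < n) for a huge base B and the points
  x_j = 1 - \<delta> / B^j. Then x_j^(e_i) is within \<delta> of 1 for i \<le> j and within \<delta> of 0 for
  i > j, so as long as all coefficients are at most n^2 in absolute value, f_S(x_j) is within
  1/2 of the partial sum a_0 + ... + a_j. If this partial sum lies in (1, 2) and a_(j+1) lies
  in (-4, -3), then f_S changes sign on (x_j, x_(j+1)). The partial sum is N(0, j + 1) and
  independent of a_(j+1), so this happens with probability of order 1 / sqrt (j + 1), up to the
  probability 1/n that some coefficient is large. Summing over j < n - 1 gives of order sqrt n
  expected zeros.\<close>

section \<open>Gaussian coefficients\<close>

lemma std_normal_eq_normal_density: "std_normal = density lborel (normal_density 0 1)"
  unfolding std_normal_def by (simp add: std_normal_density_def normal_density_def)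

lemma prob_space_std_normal: "prob_space std_normal"
  unfolding std_normal_eq_normal_density by (rule prob_space_normal_density) simp

lemma sets_std_normal [measurable_cong, simp]: "sets std_normal = sets borel"
  unfolding std_normal_def by simp

lemma prob_space_coeff_space: "prob_space (coeff_space S)"
  unfolding coeff_space_def by (intro prob_space_PiM prob_space_std_normal)

lemma distr_coeff_space_coord:
  assumes "i \<in> S"
  shows "distr (coeff_space S) std_normal (\<lambda>a. a i) = std_normal"
  unfolding coeff_space_def using assms by (intro distr_PiM_component prob_space_std_normal)

lemma distributed_coeff_space_coord:
  assumes "i \<in> S"
  shows "distributed (coeff_space S) lborel (\<lambda>a. a i) (normal_density 0 1)"
proof -
  have "distr (coeff_space S) lborel (\<lambda>a. a i) = distr (coeff_space S) std_normal (\<lambda>a. a i)"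
    by (rule distr_cong) auto
  then show ?thesis
    using assms distr_coeff_space_coord[OF assms]
    unfolding distributed_def coeff_space_def std_normal_eq_normal_density by simp
qed

lemma indep_vars_coeff_space_coords:
  assumes "finite S"
  shows "prob_space.indep_vars (coeff_space S) (\<lambda>_. borel) (\<lambda>i a. a i) S"
proof (cases "S = {}")
  case True
  then show ?thesis
    by (simp add: prob_space.indep_vars_def[OF prob_space_coeff_space]
        prob_space.indep_sets_def[OF prob_space_coeff_space])
next
  case False
  have "prob_space.indep_vars (coeff_space S) (\<lambda>_. std_normal) (\<lambda>i a. a i) S"
  proof (subst prob_space.indep_vars_iff_distr_eq_PiM'[OF prob_space_coeff_space False])
    show "(\<lambda>a. a i) \<in> measurable (coeff_space S) std_normal" if "i \<in> S" for i
      using that unfolding coeff_space_def by measurable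
    have "distr (coeff_space S) (\<Pi>\<^sub>M i\<in>S. std_normal) (\<lambda>a. restrict a S)
        = distr (coeff_space S) (coeff_space S) (\<lambda>a. a)"
      by (rule distr_cong) (auto simp: coeff_space_def space_PiM)
    also have "\<dots> = (\<Pi>\<^sub>M i\<in>S. distr (coeff_space S) std_normal (\<lambda>a. a i))"
      unfolding distr_id coeff_space_def
      by (intro PiM_cong refl) (simp add: distr_coeff_space_coord[unfolded coeff_space_def])
    finally show "distr (coeff_space S) (\<Pi>\<^sub>M i\<in>S. std_normal) (\<lambda>a. restrict a S)
        = (\<Pi>\<^sub>M i\<in>S. distr (coeff_space S) std_normal (\<lambda>a. a i))" .
  qed
  then show ?thesis
    by (rule prob_space.indep_vars_compose2[OF prob_space_coeff_space, where Y="\<lambda>_ x. x"]) simp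
qed

lemma distributed_coeff_space_sum:
  assumes "finite S" "I \<subseteq> S" "I \<noteq> {}"
  shows "distributed (coeff_space S) lborel (\<lambda>a. \<Sum>i\<in>I. a i) (normal_density 0 (sqrt (card I)))"
proof -
  have "finite I" using assms finite_subset by blast
  then have "distributed (coeff_space S) lborel (\<lambda>a. \<Sum>i\<in>I. a i)
      (normal_density (\<Sum>i\<in>I. 0) (sqrt (\<Sum>i\<in>I. 1\<^sup>2)))"
    using assms
    by (intro prob_space.sum_indep_normal[OF prob_space_coeff_space]
        prob_space.indep_vars_subset[OF prob_space_coeff_space indep_vars_coeff_space_coords]
        distributed_coeff_space_coord) auto
  then show ?thesis by simp
qed

lemma indep_var_coeff_space_coord_sum:
  assumes "finite S" "I \<subseteq> S" "m \<in> S" "m \<notin> I"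
  shows "prob_space.indep_var (coeff_space S) borel (\<lambda>a. a m) borel (\<lambda>a. \<Sum>i\<in>I. a i)"
  using assms finite_subset[OF assms(2,1)]
  by (intro prob_space.indep_vars_sum[OF prob_space_coeff_space]
      prob_space.indep_vars_subset[OF prob_space_coeff_space indep_vars_coeff_space_coords]) auto

lemma prob_normal_interval_ge:
  fixes c d R \<sigma> :: real
  assumes "prob_space M" "distributed M lborel X (normal_density 0 \<sigma>)" "0 < \<sigma>" "c \<le> d"
    and "\<And>x. c \<le> x \<Longrightarrow> x \<le> d \<Longrightarrow> x\<^sup>2 \<le> R"
  shows "(d - c) * exp (- R / (2 * \<sigma>\<^sup>2)) / sqrt (2 * pi * \<sigma>\<^sup>2)
      \<le> measure M {\<omega>\<in>space M. X \<omega> \<in> {c<..<d}}"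
proof -
  interpret prob_space M by fact
  define K where "K = exp (- R / (2 * \<sigma>\<^sup>2)) / sqrt (2 * pi * \<sigma>\<^sup>2)"
  have "K \<ge> 0" unfolding K_def by simp
  then have "ennreal ((d - c) * K) = (\<integral>\<^sup>+ x. ennreal K * indicator {c<..<d} x \<partial>lborel)"
    using assms(4) by (simp add: nn_integral_cmult_indicator ennreal_mult' mult.commute)
  also have "\<dots> \<le> (\<integral>\<^sup>+ x. ennreal (normal_density 0 \<sigma> x) * indicator {c<..<d} x \<partial>lborel)"
  proof (intro nn_integral_mono)
    fix x
    show "ennreal K * indicator {c<..<d} x \<le> ennreal (normal_density 0 \<sigma> x) * indicator {c<..<d} x"
    proof (cases "x \<in> {c<..<d}")
      case True
      then have "- R / (2 * \<sigma>\<^sup>2) \<le> - x\<^sup>2 / (2 * \<sigma>\<^sup>2)"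
        using assms(3,5) by (intro divide_right_mono) auto
      then have "K \<le> normal_density 0 \<sigma> x"
        unfolding K_def normal_density_def by (simp add: divide_right_mono)
      then show ?thesis using True by (simp add: ennreal_leI)
    qed simp
  qed
  also have "\<dots> = emeasure M {\<omega>\<in>space M. X \<omega> \<in> {c<..<d}}"
    using distributed_emeasure[OF assms(2), of "{c<..<d}"]
    by (simp add: emeasure_density vimage_def Int_def conj_commute)
  finally show ?thesis
    unfolding K_def emeasure_eq_measure by (simp add: ennreal_le_iff)
qed

lemma emeasure_std_normal_tail_le:
  fixes T :: real
  assumes "T > 0"
  shows "emeasure std_normal {x. T < \<bar>x\<bar>} \<le> ennreal (1 / T)"
proof -
  \<comment> \<open>Markov's inequality for \<open>\<bar>x\<bar>\<close>, whose mean \<open>sqrt (2 / pi)\<close> is at most 1\<close>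
  have "emeasure std_normal {x. T < \<bar>x\<bar>}
      = (\<integral>\<^sup>+ x. ennreal (std_normal_density x) * indicator {x. T < \<bar>x\<bar>} x \<partial>lborel)"
    unfolding std_normal_def by (simp add: emeasure_density)
  also have "\<dots> \<le> (\<integral>\<^sup>+ x. ennreal (std_normal_density x * \<bar>x\<bar> ^ (2 * 0 + 1) / T) \<partial>lborel)"
  proof (intro nn_integral_mono)
    fix x
    show "ennreal (std_normal_density x) * indicator {x. T < \<bar>x\<bar>} x
        \<le> ennreal (std_normal_density x * \<bar>x\<bar> ^ (2 * 0 + 1) / T)"
    proof (cases "T < \<bar>x\<bar>")
      case True
      have "std_normal_density x * 1 \<le> std_normal_density x * (\<bar>x\<bar> / T)"
        using True assms by (intro mult_left_mono) auto
      then show ?thesis using True by (simp add: ennreal_leI)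
    qed simp
  qed
  also have "\<dots> = ennreal (sqrt (2 / pi) / T)"
    using assms integrable_std_normal_moment_abs[of "2 * 0 + 1"] integral_std_normal_moment_abs_odd[of 0]
    by (subst nn_integral_eq_integral) auto
  also have "\<dots> \<le> ennreal (1 / T)"
    using assms pi_gt3 by (intro ennreal_leI divide_right_mono) (auto simp: real_sqrt_le_1_iff)
  finally show ?thesis .
qed

lemma sqrt_2pi_le_3: "sqrt (2 * pi) \<le> 3"
proof -
  have "sqrt (2 * pi) \<le> sqrt 9" using pi_less_4 by (subst real_sqrt_le_iff) simp
  also have "sqrt 9 = (3::real)" by (simp add: real_sqrt_eq_iff)
  finally show ?thesis .
qed

lemma prob_coeff_sum_in_1_2_ge:
  assumes "finite S" "I \<subseteq> S" "I \<noteq> {}"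
  shows "exp (-2) / (3 * sqrt (card I))
    \<le> measure (coeff_space S) {a\<in>space (coeff_space S). (\<Sum>i\<in>I. a i) \<in> {1<..<2}}"
proof -
  define n where "n = real (card I)"
  have n: "n \<ge> 1"
    using assms finite_subset unfolding n_def by (fastforce simp: Suc_le_eq card_gt_0_iff)
  have "exp (-2) / (3 * sqrt n) \<le> exp (- 4 / (2 * n)) / (sqrt (2 * pi) * sqrt n)"
    using n sqrt_2pi_le_3 by (intro frac_le mult_right_mono) (auto simp: field_simps)
  also have "\<dots> = (2 - 1) * exp (- 4 / (2 * (sqrt n)\<^sup>2)) / sqrt (2 * pi * (sqrt n)\<^sup>2)"
    using n by (simp add: real_sqrt_mult)
  also have "\<dots> \<le> measure (coeff_space S) {a\<in>space (coeff_space S). (\<Sum>i\<in>I. a i) \<in> {1<..<2}}"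
  proof (rule prob_normal_interval_ge[OF prob_space_coeff_space])
    show "distributed (coeff_space S) lborel (\<lambda>a. \<Sum>i\<in>I. a i) (normal_density 0 (sqrt n))"
      unfolding n_def using assms by (rule distributed_coeff_space_sum)
    fix x :: real assume "1 \<le> x" "x \<le> 2"
    then have "x * x \<le> 2 * 2" by (intro mult_mono) auto
    then show "x\<^sup>2 \<le> 4" by (simp add: power2_eq_square)
  qed (use n in auto)
  finally show ?thesis unfolding n_def .
qed

lemma prob_coeff_in_neg4_neg3_ge:
  assumes "m \<in> S"
  shows "exp (-8) / 3 \<le> measure (coeff_space S) {a\<in>space (coeff_space S). a m \<in> {-4<..<-3}}"
proof -
  have "exp (-8) / 3 \<le> exp (-8) / sqrt (2 * pi)"
    using sqrt_2pi_le_3 by (intro divide_left_mono) auto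
  also have "\<dots> = (-3 - -4) * exp (- 16 / (2 * 1\<^sup>2)) / sqrt (2 * pi * 1\<^sup>2)"
    by simp
  also have "\<dots> \<le> measure (coeff_space S) {a\<in>space (coeff_space S). a m \<in> {-4<..<-3}}"
  proof (rule prob_normal_interval_ge[OF prob_space_coeff_space distributed_coeff_space_coord[OF assms]])
    fix x :: real assume "-4 \<le> x" "x \<le> -3"
    then have "(-x) * (-x) \<le> 4 * 4" by (intro mult_mono) auto
    then show "x\<^sup>2 \<le> 16" by (simp add: power2_eq_square)
  qed auto
  finally show ?thesis .
qed

lemma measurable_coeff_space_coord:
  assumes "i \<in> S"
  shows "(\<lambda>a. a i) \<in> borel_measurable (coeff_space S)"
  using assms unfolding coeff_space_def by measurable

lemma pred_coeff_space_coeffs_bounded: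
  assumes "finite S"
  shows "Measurable.pred (coeff_space S) (\<lambda>a. \<forall>i\<in>S. \<bar>a i\<bar> \<le> T)"
  using assms(1)
proof (rule pred_intros_finite(3))
  fix i assume "i \<in> S"
  then show "Measurable.pred (coeff_space S) (\<lambda>a. \<bar>a i\<bar> \<le> T)"
    unfolding coeff_space_def by measurable
qed

lemma prob_coeff_exceeds_le:
  assumes "finite S" "T > 0"
  shows "measure (coeff_space S) {a\<in>space (coeff_space S). \<not> (\<forall>i\<in>S. \<bar>a i\<bar> \<le> T)} \<le> card S / T"
proof -
  interpret prob_space "coeff_space S" by (rule prob_space_coeff_space)
  interpret N: prob_space std_normal by (rule prob_space_std_normal)
  define B where "B i = {a\<in>space (coeff_space S). T < \<bar>a i\<bar>}" for i
  have B: "B i \<in> events" if "i \<in> S" for i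
  proof -
    have "Measurable.pred (coeff_space S) (\<lambda>a. T < \<bar>a i\<bar>)"
      by (rule measurable_compose[OF measurable_coeff_space_coord[OF that]]) measurable
    then show ?thesis unfolding B_def pred_def by simp
  qed
  have prob_B: "prob (B i) \<le> 1 / T" if "i \<in> S" for i
  proof -
    have "(\<lambda>a. a i) \<in> measurable (coeff_space S) std_normal"
      using that unfolding coeff_space_def by measurable
    then have "prob (B i) = measure (distr (coeff_space S) std_normal (\<lambda>a. a i)) {x. T < \<bar>x\<bar>}"
      unfolding B_def by (subst measure_distr) (auto simp: vimage_def Int_def conj_commute)
    also have "\<dots> = N.prob {x. T < \<bar>x\<bar>}"
      unfolding distr_coeff_space_coord[OF that] ..
    also have "\<dots> \<le> 1 / T"
      using emeasure_std_normal_tail_le[OF assms(2)] assms(2)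
      by (simp add: N.emeasure_eq_measure ennreal_le_iff)
    finally show ?thesis .
  qed
  have "{a\<in>space (coeff_space S). \<not> (\<forall>i\<in>S. \<bar>a i\<bar> \<le> T)} = (\<Union>i\<in>S. B i)"
    unfolding B_def by (auto simp: not_le)
  then have "prob {a\<in>space (coeff_space S). \<not> (\<forall>i\<in>S. \<bar>a i\<bar> \<le> T)} = prob (\<Union>i\<in>S. B i)"
    by (rule arg_cong)
  also have "\<dots> \<le> (\<Sum>i\<in>S. prob (B i))"
    using B assms(1) by (intro finite_measure_subadditive_finite) auto
  also have "\<dots> \<le> (\<Sum>i\<in>S. 1 / T)"
    using prob_B by (rule sum_mono)
  also have "\<dots> = card S / T"
    by simp
  finally show ?thesis .
qed

lemma pred_sign_change_event:
  assumes "finite S" "I \<subseteq> S" "m \<in> S"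
  shows "Measurable.pred (coeff_space S)
    (\<lambda>a. (\<Sum>i\<in>I. a i) \<in> {1<..<2} \<and> a m \<in> {-4<..<-3} \<and> (\<forall>i\<in>S. \<bar>a i\<bar> \<le> T))"
proof -
  have "(\<lambda>a. \<Sum>i\<in>I. a i) \<in> borel_measurable (coeff_space S)"
    using assms(2) by (intro borel_measurable_sum measurable_coeff_space_coord) auto
  then have "Measurable.pred (coeff_space S) (\<lambda>a. (\<Sum>i\<in>I. a i) \<in> {1<..<2})"
    by (rule pred_sets2[rotated]) simp
  moreover have "Measurable.pred (coeff_space S) (\<lambda>a. a m \<in> {-4<..<-3})"
    using measurable_coeff_space_coord[OF assms(3)] by (rule pred_sets2[rotated]) simp
  ultimately show ?thesis
    using pred_coeff_space_coeffs_bounded[OF assms(1)] by (intro pred_intros_logic(3))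
qed

lemma prob_sign_change_event_ge:
  assumes "finite S" "I \<subseteq> S" "I \<noteq> {}" "m \<in> S" "m \<notin> I" "T > 0"
  shows "exp (-10) / (9 * sqrt (card I)) - card S / T
    \<le> measure (coeff_space S) {a\<in>space (coeff_space S). (\<Sum>i\<in>I. a i) \<in> {1<..<2} \<and>
         a m \<in> {-4<..<-3} \<and> (\<forall>i\<in>S. \<bar>a i\<bar> \<le> T)}"
proof -
  interpret prob_space "coeff_space S" by (rule prob_space_coeff_space)
  define A where "A = {a\<in>space (coeff_space S). (\<Sum>i\<in>I. a i) \<in> {1<..<2} \<and> a m \<in> {-4<..<-3}}"
  define E where "E = {a\<in>space (coeff_space S). (\<Sum>i\<in>I. a i) \<in> {1<..<2} \<and>
         a m \<in> {-4<..<-3} \<and> (\<forall>i\<in>S. \<bar>a i\<bar> \<le> T)}"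
  define B where "B = {a\<in>space (coeff_space S). \<not> (\<forall>i\<in>S. \<bar>a i\<bar> \<le> T)}"
  have events: "E \<in> events" "B \<in> events"
    using pred_sign_change_event[OF assms(1,2,4)]
      pred_intros_logic(2)[OF pred_coeff_space_coeffs_bounded[OF assms(1)]]
    unfolding E_def B_def pred_def by simp_all
  have "prob A = prob {a\<in>space (coeff_space S). a m \<in> {-4<..<-3}} *
      prob {a\<in>space (coeff_space S). (\<Sum>i\<in>I. a i) \<in> {1<..<2}}"
    using indep_varD[OF indep_var_coeff_space_coord_sum[OF assms(1,2,4,5)], of "{-4<..<-3}" "{1<..<2}"]
    unfolding A_def by (simp add: vimage_def Int_def conj_commute)
  have "exp (-10) / (9 * sqrt (card I)) = (exp (-8) / 3) * (exp (-2) / (3 * sqrt (card I)))"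
    by (simp add: exp_add[symmetric])
  also have "\<dots> \<le> prob A"
    unfolding \<open>prob A = _\<close>
    using prob_coeff_sum_in_1_2_ge[OF assms(1-3)] prob_coeff_in_neg4_neg3_ge[OF assms(4)]
    by (intro mult_mono) (simp_all add: measure_nonneg)
  also have "\<dots> \<le> prob (E \<union> B)"
    using events by (intro finite_measure_mono) (auto simp: A_def E_def B_def)
  also have "\<dots> \<le> prob E + prob B"
    using events by (intro measure_subadditive) auto
  finally show ?thesis
    using prob_coeff_exceeds_le[OF assms(1,6)] unfolding E_def B_def by linarith
qed

section \<open>Lacunary sums near a step function\<close>

lemma one_minus_power_le_inverse:
  fixes t :: real
  assumes "0 < t" "t < 1" "0 < n"
  shows "(1 - t) ^ n \<le> 1 / (n * t)"
proof -
  have "(1 - t) ^ n * (1 + t) ^ n = (1 - t\<^sup>2) ^ n"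
    by (simp add: power_mult_distrib[symmetric] power2_eq_square algebra_simps)
  also have "\<dots> \<le> 1"
    using assms by (intro power_le_one) (auto simp: power2_eq_square mult_le_one)
  finally have le_1: "(1 - t) ^ n * (1 + t) ^ n \<le> 1" .
  have "(1 - t) ^ n * (n * t) \<le> (1 - t) ^ n * (1 + t) ^ n"
    using Bernoulli_inequality[of t n] assms by (intro mult_left_mono) auto
  moreover have "0 < n * t"
    using assms by simp
  ultimately show ?thesis
    using le_1 by (simp add: field_simps)
qed

lemma lacunary_power_near_indicator:
  fixes d :: real and M :: nat
  assumes "0 < d" "d < 1" "1 \<le> M * d\<^sup>2"
  shows "\<bar>(1 - d / M ^ j) ^ (M ^ i) - (if i \<le> j then 1 else 0)\<bar> \<le> d"
proof -
  define t where "t = d / M ^ j"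
  have "d\<^sup>2 < 1"
    using assms(1,2) by (simp add: abs_square_less_1)
  have "1 < real M"
  proof (rule ccontr)
    assume "\<not> 1 < real M"
    then have "M * d\<^sup>2 \<le> d\<^sup>2" by (intro mult_left_le_one_le) auto
    with assms(3) \<open>d\<^sup>2 < 1\<close> show False by linarith
  qed
  then have t: "0 < t" "t \<le> d"
    using assms unfolding t_def by (auto simp: divide_le_eq)
  show ?thesis
  proof (cases "i \<le> j")
    case True
    have "real (M ^ i) * t \<le> d"
      using \<open>1 < real M\<close> True assms unfolding t_def
      by (simp add: field_simps power_increasing)
    then have "1 - d \<le> (1 - t) ^ (M ^ i)"
      using Bernoulli_inequality[of "-t" "M ^ i"] t assms by simp
    moreover have "(1 - t) ^ (M ^ i) \<le> 1"
      using t assms by (intro power_le_one) auto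
    ultimately show ?thesis using True unfolding t_def by simp
  next
    case False
    have "real M ^ Suc j \<le> real M ^ i"
      using \<open>1 < real M\<close> False by (intro power_increasing) auto
    then have "real M * d \<le> real (M ^ i) * t"
      using assms \<open>1 < real M\<close> unfolding t_def by (simp add: field_simps)
    have "(1 - t) ^ (M ^ i) \<le> 1 / (real (M ^ i) * t)"
      using t assms \<open>1 < real M\<close> by (intro one_minus_power_le_inverse) auto
    also have "\<dots> \<le> 1 / (real M * d)"
      using \<open>real M * d \<le> real (M ^ i) * t\<close> assms t \<open>1 < real M\<close>
      by (intro divide_left_mono) (auto intro!: mult_pos_pos)
    also have "\<dots> \<le> d"
      using assms \<open>1 < real M\<close> by (simp add: pos_divide_le_eq power2_eq_square mult_ac)
    finally show ?thesis
      using False t assms unfolding t_def by simp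
  qed
qed

lemma lacunary_sum_near_partial_sum:
  fixes d T :: real and M :: nat and c :: "nat \<Rightarrow> real"
  assumes "0 < d" "d < 1" "1 \<le> M * d\<^sup>2" "j < n" "\<And>i. i < n \<Longrightarrow> \<bar>c i\<bar> \<le> T"
  shows "\<bar>(\<Sum>i<n. c i * (1 - d / M ^ j) ^ (M ^ i)) - (\<Sum>i\<le>j. c i)\<bar> \<le> n * T * d"
proof -
  have "(\<Sum>i<n. c i * (if i \<le> j then 1 else 0)) = (\<Sum>i<n. if i \<le> j then c i else 0)"
    by (intro sum.cong) auto
  also have "\<dots> = sum c {i\<in>{..<n}. i \<le> j}"
    by (rule sum.inter_filter[symmetric]) simp
  also have "{i\<in>{..<n}. i \<le> j} = {..j}"
    using assms(4) by auto
  finally have "\<bar>(\<Sum>i<n. c i * (1 - d / M ^ j) ^ (M ^ i)) - (\<Sum>i\<le>j. c i)\<bar>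
      = \<bar>\<Sum>i<n. c i * ((1 - d / M ^ j) ^ (M ^ i) - (if i \<le> j then 1 else 0))\<bar>"
    by (simp add: sum_subtractf right_diff_distrib)
  also have "\<dots> \<le> (\<Sum>i<n. \<bar>c i\<bar> * \<bar>(1 - d / M ^ j) ^ (M ^ i) - (if i \<le> j then 1 else 0)\<bar>)"
    by (rule order_trans[OF sum_abs]) (simp add: abs_mult)
  also have "\<dots> \<le> (\<Sum>i<n. T * d)"
    using assms lacunary_power_near_indicator
    by (intro sum_mono mult_mono) (auto intro: order_trans[OF abs_ge_zero])
  finally show ?thesis by simp
qed

lemma card_sign_changes_le_card_roots:
  fixes p :: "real poly" and x :: "nat \<Rightarrow> real"
  assumes "strict_mono x"
    and sign: "\<And>j. j \<in> J \<Longrightarrow> poly p (x j) > 0 \<and> poly p (x (Suc j)) < 0"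
    and range: "\<And>j. j \<in> J \<Longrightarrow> a \<le> x j \<and> x (Suc j) \<le> b"
  shows "card J \<le> card {z\<in>{a<..<b}. poly p z = 0}"
proof (cases "J = {}")
  case False
  then have "p \<noteq> 0" using sign by fastforce
  have finite_roots: "finite {z\<in>{a<..<b}. poly p z = 0}"
    using poly_roots_finite[OF \<open>p \<noteq> 0\<close>] by (rule finite_subset[rotated]) auto
  have "\<exists>z. x j < z \<and> z < x (Suc j) \<and> poly p z = 0" if "j \<in> J" for j
    using sign[OF that] \<open>strict_mono x\<close> by (intro poly_IVT_neg) (auto simp: strict_mono_def)
  then obtain r where r: "\<And>j. j \<in> J \<Longrightarrow> x j < r j \<and> r j < x (Suc j) \<and> poly p (r j) = 0"
    by metis
  have "r j < r j'" if "j \<in> J" "j' \<in> J" "j < j'" for j j'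
  proof -
    have "x (Suc j) \<le> x j'"
      using \<open>strict_mono x\<close> that(3) by (simp add: strict_mono_less_eq)
    then show ?thesis using r[OF that(1)] r[OF that(2)] by linarith
  qed
  then have "inj_on r J"
    by (metis inj_onI linorder_neqE_nat order_less_irrefl)
  then have "card J = card (r ` J)" by (simp add: card_image)
  also have "\<dots> \<le> card {z\<in>{a<..<b}. poly p z = 0}"
    using r range by (intro card_mono finite_roots) fastforce
  finally show ?thesis .
qed simp

lemma rand_poly_eq_poly: "rand_poly S a x = poly (\<Sum>e\<in>S. monom (a e) e) x"
  unfolding rand_poly_def by (simp add: poly_sum poly_monom)

text \<open>The base is 1 / \<delta>^2 for the step \<delta> = 1 / (2 n \<cdot> n^2): then n coefficients bounded
  by n^2 make an error of at most 1/2.\<close>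

definition lacunary_base :: "nat \<Rightarrow> nat" where
  "lacunary_base n = 4 * n ^ 6"

definition lacunary_exponents :: "nat \<Rightarrow> nat set" where
  "lacunary_exponents n = (\<lambda>i. lacunary_base n ^ i) ` {..<n}"

definition lacunary_step :: "nat \<Rightarrow> real" where
  "lacunary_step n = 1 / (2 * real n ^ 3)"

definition lacunary_point :: "nat \<Rightarrow> nat \<Rightarrow> real" where
  "lacunary_point n j = 1 - lacunary_step n / lacunary_base n ^ j"

definition sign_change_event :: "nat \<Rightarrow> nat \<Rightarrow> (nat \<Rightarrow> real) set" where
  "sign_change_event n j = {a\<in>space (coeff_space (lacunary_exponents n)).
     (\<Sum>e\<in>(\<lambda>i. lacunary_base n ^ i) ` {..j}. a e) \<in> {1<..<2} \<and>
     a (lacunary_base n ^ Suc j) \<in> {-4<..<-3} \<and>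
     (\<forall>e\<in>lacunary_exponents n. \<bar>a e\<bar> \<le> real n ^ 2)}"

lemma lacunary_base_gt_1: "1 \<le> n \<Longrightarrow> 1 < lacunary_base n"
  unfolding lacunary_base_def using one_le_power[of n 6] by linarith

lemma inj_lacunary_powers: "1 \<le> n \<Longrightarrow> inj (\<lambda>i. lacunary_base n ^ i)"
  using lacunary_base_gt_1 by (auto intro!: injI simp: power_inject_exp)

lemma card_lacunary_exponents: "1 \<le> n \<Longrightarrow> card (lacunary_exponents n) = n"
  unfolding lacunary_exponents_def
  by (simp add: card_image inj_on_subset[OF inj_lacunary_powers])

lemma finite_lacunary_exponents: "finite (lacunary_exponents n)"
  unfolding lacunary_exponents_def by simp

lemma lacunary_step_bounds:
  assumes "1 \<le> n"
  shows "0 < lacunary_step n" "lacunary_step n < 1"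
proof -
  have "1 \<le> real n ^ 3"
    using assms by simp
  then show "0 < lacunary_step n" "lacunary_step n < 1"
    unfolding lacunary_step_def using assms by (simp_all add: divide_less_eq del: one_le_power)
qed

lemma lacunary_base_mult_step_sq: "1 \<le> n \<Longrightarrow> real (lacunary_base n) * (lacunary_step n)\<^sup>2 = 1"
  unfolding lacunary_base_def lacunary_step_def
  by (simp add: field_simps power2_eq_square flip: power_add)

lemma strict_mono_lacunary_point: "1 \<le> n \<Longrightarrow> strict_mono (lacunary_point n)"
  unfolding lacunary_point_def
  using lacunary_base_gt_1[of n] lacunary_step_bounds[of n]
  by (intro strict_monoI) (simp add: divide_strict_left_mono power_strict_increasing)

lemma lacunary_point_bounds:
  assumes "1 \<le> n"
  shows "0 < lacunary_point n j" "lacunary_point n j < 1"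
proof -
  have "1 \<le> real (lacunary_base n ^ j)"
    using lacunary_base_gt_1[OF assms] by simp
  then have "0 < lacunary_step n / lacunary_base n ^ j"
      "lacunary_step n / lacunary_base n ^ j \<le> lacunary_step n"
    using lacunary_step_bounds[OF assms] lacunary_base_gt_1[OF assms]
    by (auto simp: divide_le_eq zero_less_divide_iff intro: mult_le_cancel_left1[THEN iffD2])
  then show "0 < lacunary_point n j" "lacunary_point n j < 1"
    unfolding lacunary_point_def using lacunary_step_bounds[OF assms] by auto
qed

lemma rand_poly_lacunary_point_near_partial_sum:
  assumes "1 \<le> n" "j < n" "\<forall>e\<in>lacunary_exponents n. \<bar>a e\<bar> \<le> real n ^ 2"
  shows "\<bar>rand_poly (lacunary_exponents n) a (lacunary_point n j)
      - (\<Sum>i\<le>j. a (lacunary_base n ^ i))\<bar> \<le> 1 / 2"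
proof -
  define d where "d = lacunary_step n"
  have "rand_poly (lacunary_exponents n) a (lacunary_point n j)
      = (\<Sum>i<n. a (lacunary_base n ^ i) * (1 - d / lacunary_base n ^ j) ^ (lacunary_base n ^ i))"
    unfolding rand_poly_def lacunary_exponents_def lacunary_point_def d_def
    by (simp add: sum.reindex inj_on_subset[OF inj_lacunary_powers[OF assms(1)]])
  moreover have "\<bar>(\<Sum>i<n. a (lacunary_base n ^ i) * (1 - d / lacunary_base n ^ j) ^ (lacunary_base n ^ i))
      - (\<Sum>i\<le>j. a (lacunary_base n ^ i))\<bar> \<le> real n * real n ^ 2 * d"
    using lacunary_step_bounds[OF assms(1)] lacunary_base_mult_step_sq[OF assms(1)] assms(2,3)
    by (intro lacunary_sum_near_partial_sum) (auto simp: d_def lacunary_exponents_def)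
  moreover have "real n * real n ^ 2 * d = 1 / 2"
    using assms(1) unfolding d_def lacunary_step_def by (simp add: power2_eq_square power3_eq_cube)
  ultimately show ?thesis by simp
qed

lemma card_sign_change_events_le_card_zeros:
  assumes "1 \<le> n"
  shows "card {j\<in>{..<n - 1}. a \<in> sign_change_event n j}
    \<le> card {x\<in>{0<..<1}. rand_poly (lacunary_exponents n) a x = 0}"
proof -
  let ?f = "rand_poly (lacunary_exponents n) a"
  let ?s = "\<lambda>j. \<Sum>i\<le>j. a (lacunary_base n ^ i)"
  have sign: "?f (lacunary_point n j) > 0 \<and> ?f (lacunary_point n (Suc j)) < 0"
    if "j \<in> {j\<in>{..<n - 1}. a \<in> sign_change_event n j}" for j
  proof -
    have "(\<Sum>e\<in>(\<lambda>i. lacunary_base n ^ i) ` {..j}. a e) = ?s j"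
      by (simp add: sum.reindex inj_on_subset[OF inj_lacunary_powers[OF assms]])
    then have event: "?s j \<in> {1<..<2}" "a (lacunary_base n ^ Suc j) \<in> {-4<..<-3}"
        "\<forall>e\<in>lacunary_exponents n. \<bar>a e\<bar> \<le> real n ^ 2"
      using that unfolding sign_change_event_def by auto
    have "Suc j < n"
      using that by auto
    have "\<bar>?f (lacunary_point n j) - ?s j\<bar> \<le> 1 / 2"
      using \<open>Suc j < n\<close> event(3) by (intro rand_poly_lacunary_point_near_partial_sum assms) auto
    moreover have "\<bar>?f (lacunary_point n (Suc j)) - (?s j + a (lacunary_base n ^ Suc j))\<bar> \<le> 1 / 2"
      using rand_poly_lacunary_point_near_partial_sum[OF assms \<open>Suc j < n\<close> event(3)] by simp
    ultimately show ?thesis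
      using event(1,2) unfolding abs_le_iff greaterThanLessThan_iff by linarith
  qed
  have "card {j\<in>{..<n - 1}. a \<in> sign_change_event n j}
      \<le> card {x\<in>{0<..<1}. poly (\<Sum>e\<in>lacunary_exponents n. monom (a e) e) x = 0}"
    using sign lacunary_point_bounds[OF assms]
    by (intro card_sign_changes_le_card_roots[OF strict_mono_lacunary_point[OF assms]])
       (auto simp: rand_poly_eq_poly less_imp_le)
  then show ?thesis by (simp add: rand_poly_eq_poly)
qed

lemma
  assumes "Suc j < n"
  shows sets_sign_change_event:
      "sign_change_event n j \<in> sets (coeff_space (lacunary_exponents n))"
    and prob_sign_change_event_lacunary_ge:
      "exp (-10) / (9 * sqrt (Suc j)) - 1 / n
        \<le> measure (coeff_space (lacunary_exponents n)) (sign_change_event n j)"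
proof -
  have n: "1 \<le> n" using assms by simp
  let ?S = "lacunary_exponents n" and ?I = "(\<lambda>i. lacunary_base n ^ i) ` {..j}"
  have I: "?I \<subseteq> ?S" "?I \<noteq> {}" "card ?I = Suc j"
    using assms unfolding lacunary_exponents_def
    by (auto simp: card_image inj_on_subset[OF inj_lacunary_powers[OF n]])
  have m: "lacunary_base n ^ Suc j \<in> ?S" "lacunary_base n ^ Suc j \<notin> ?I"
    using assms injD[OF inj_lacunary_powers[OF n]] unfolding lacunary_exponents_def by fastforce+
  show "sign_change_event n j \<in> sets (coeff_space ?S)"
    using pred_sign_change_event[OF finite_lacunary_exponents I(1) m(1)]
    unfolding sign_change_event_def pred_def by simp
  have "real (card ?S) / real n ^ 2 = 1 / n"
    using n by (simp add: card_lacunary_exponents power2_eq_square)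
  then show "exp (-10) / (9 * sqrt (Suc j)) - 1 / n
      \<le> measure (coeff_space ?S) (sign_change_event n j)"
    using prob_sign_change_event_ge[OF finite_lacunary_exponents I(1,2) m, of "real n ^ 2"] n
    unfolding sign_change_event_def I(3) by simp
qed

lemma sum_emeasure_sign_change_events_le_exp_zeros:
  assumes "1 \<le> n"
  shows "(\<Sum>j<n - 1. emeasure (coeff_space (lacunary_exponents n)) (sign_change_event n j))
    \<le> exp_zeros (lacunary_exponents n)"
proof -
  have "(\<Sum>j<n - 1. emeasure (coeff_space (lacunary_exponents n)) (sign_change_event n j))
      = (\<integral>\<^sup>+ a. (\<Sum>j<n - 1. indicator (sign_change_event n j) a) \<partial>coeff_space (lacunary_exponents n))"
    using sets_sign_change_event by (subst nn_integral_sum) auto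
  also have "\<dots> \<le> exp_zeros (lacunary_exponents n)"
    unfolding exp_zeros_def exp_zeros_in_def
  proof (rule nn_integral_mono)
    fix a
    have "(\<Sum>j<n - 1. indicator (sign_change_event n j) a :: ennreal)
        = (\<Sum>j<n - 1. if a \<in> sign_change_event n j then 1 else 0)"
      by (simp add: indicator_def of_bool_def)
    also have "\<dots> = of_nat (card {j\<in>{..<n - 1}. a \<in> sign_change_event n j})"
      by (simp flip: sum.inter_filter)
    also have "\<dots> \<le> of_nat (card {x\<in>{0<..<1}. rand_poly (lacunary_exponents n) a x = 0})"
      using card_sign_change_events_le_card_zeros[OF assms] by (rule of_nat_mono)
    finally show "(\<Sum>j<n - 1. indicator (sign_change_event n j) a)
        \<le> ennreal (real (card {x\<in>{0<..<1}. rand_poly (lacunary_exponents n) a x = 0}))"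
      by (simp add: ennreal_of_nat_eq_real_of_nat)
  qed
  finally show ?thesis .
qed

lemma exp_zeros_lacunary_ge:
  assumes "2 \<le> n"
  shows "ennreal (exp (-10) / 9 * sqrt (real n - 1) - 1) \<le> exp_zeros (lacunary_exponents n)"
proof -
  define c where "c = exp (-10) / (9::real)"
  define m where "m = n - 1"
  have m: "real m = real n - 1" "1 \<le> m"
    using assms unfolding m_def by auto
  let ?P = "coeff_space (lacunary_exponents n)"
  interpret prob_space ?P by (rule prob_space_coeff_space)
  have "real m / sqrt m = sqrt m"
    by (rule real_div_sqrt) simp
  then have "c * sqrt m - 1 = real m * (c / sqrt m - 1 / m)"
    using m(2) by (simp add: right_diff_distrib mult.commute[of "real m"] times_divide_eq_right[symmetric])
  also have "\<dots> = (\<Sum>j<m. c / sqrt m - 1 / m)"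
    by simp
  also have "\<dots> \<le> (\<Sum>j<m. c / sqrt (Suc j) - 1 / n)"
    using m by (intro sum_mono diff_mono divide_left_mono) (auto simp: c_def)
  also have "\<dots> \<le> (\<Sum>j<m. prob (sign_change_event n j))"
    using prob_sign_change_event_lacunary_ge unfolding c_def m_def
    by (intro sum_mono) (simp add: mult.commute)
  finally have "ennreal (c * sqrt m - 1) \<le> ennreal (\<Sum>j<m. prob (sign_change_event n j))"
    by (rule ennreal_leI)
  also have "\<dots> = (\<Sum>j<m. emeasure ?P (sign_change_event n j))"
    unfolding emeasure_eq_measure by (rule sum_ennreal[symmetric]) simp
  also have "\<dots> \<le> exp_zeros (lacunary_exponents n)"
    unfolding m_def using assms by (intro sum_emeasure_sign_change_events_le_exp_zeros) simp
  finally show ?thesis unfolding c_def using m(1) by simp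
qed

theorem theorem1p3:
  shows "\<exists>c::real. c > 0 \<and> (\<exists>S :: nat \<Rightarrow> nat set.
           (\<forall>k\<ge>1. finite (S k) \<and> card (S k) = k + 2) \<and>
           (\<forall>\<^sub>F k in sequentially. ennreal (c * sqrt (real k)) \<le> exp_zeros (S k)))"
proof (intro exI conjI)
  show "exp (-10) / 18 > (0::real)" by simp
  show "\<forall>k\<ge>1. finite (lacunary_exponents (k + 2)) \<and> card (lacunary_exponents (k + 2)) = k + 2"
    by (simp add: finite_lacunary_exponents card_lacunary_exponents)
  have "\<forall>\<^sub>F k in sequentially. exp (-10) / 18 * sqrt (real k) \<le> exp (-10) / 9 * sqrt (real k + 1) - 1"
    by real_asymp
  then show "\<forall>\<^sub>F k in sequentially.
      ennreal (exp (-10) / 18 * sqrt (real k)) \<le> exp_zeros (lacunary_exponents (k + 2))"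
  proof eventually_elim
    case (elim k)
    then have "ennreal (exp (-10) / 18 * sqrt (real k))
        \<le> ennreal (exp (-10) / 9 * sqrt (real (k + 2) - 1) - 1)"
      by (intro ennreal_leI) (simp add: add.commute)
    also have "\<dots> \<le> exp_zeros (lacunary_exponents (k + 2))"
      by (rule exp_zeros_lacunary_ge) simp
    finally show ?case .
  qed
qed

end
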